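(* For every time horizon $T\in\mathbb N$, every algorithm for the two-bit feedback brokerage problem satisfies \[\sup_\nu R_T^\nu\ge\frac T9,\] where the supremum is over all probability distributions $\nu$ on $[0,1]$.
   Context: Brokerage setting: for $p,v_1,v_2\in[0,1]$ let $\mathrm{gft}(p,v_1,v_2):=(v_1\vee v_2-v_1\wedge v_2)\,\mathbb I\{v_1\wedge v_2\le p\le v_1\vee v_2\}$ ($\vee,\wedge$ = max, min). Valuations $V_1,V_2,\dots$ are i.i.d. with law $\nu$ on $[0,1]$; at round $t$ the algorithm posts $P_t\in[0,1]$ and obtains $\mathrm{GFT}_t(P_t)$ with $\mathrm{GFT}_t(q):=\mathrm{gft}(q,V_{2t-1},V_{2t})$. A two-bit feedback algorithm chooses $P_t$ as a function of the bits $\mathbb I\{P_s\le V_{2s-1}\},\mathbb I\{P_s\le V_{2s}\}$, $s<t$ (and possibly of internal randomness independent of the valuations). $R_T^\nu:=\sup_{p\in[0,1]}\mathbb E[\sum_{t=1}^T\mathrm{GFT}_t(p)]-\mathbb E[\sum_{t=1}^T\mathrm{GFT}_t(P_t)]$ when valuations have law $\nu$. *)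

theory Defs
  imports "HOL-Probability.Probability"
begin

definition gft :: "real \<Rightarrow> real \<Rightarrow> real \<Rightarrow> real" where
  "gft p v1 v2 = (if min v1 v2 \<le> p \<and> p \<le> max v1 v2 then max v1 v2 - min v1 v2 else 0)"

text \<open>Valuations are indexed from 0: round s (0-based, s < T) uses v (2s) and v (2s+1),
  i.e. V_{2t-1}, V_{2t} with t = s+1.  A (possibly randomised) two-bit feedback algorithm is
  a map alg :: 'w => (bool x bool) list => real: given the internal randomness w and the list
  of feedback bit pairs of the previous rounds, it posts a price.\<close>

fun hist :: "('w \<Rightarrow> (bool \<times> bool) list \<Rightarrow> real) \<Rightarrow> 'w \<Rightarrow> (nat \<Rightarrow> real) \<Rightarrow> nat \<Rightarrow> (bool \<times> bool) list" where
  "hist alg w v 0 = []"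
| "hist alg w v (Suc s) =
     (let p = alg w (hist alg w v s) in hist alg w v s @ [(p \<le> v (2 * s), p \<le> v (2 * s + 1))])"

definition price :: "('w \<Rightarrow> (bool \<times> bool) list \<Rightarrow> real) \<Rightarrow> 'w \<Rightarrow> (nat \<Rightarrow> real) \<Rightarrow> nat \<Rightarrow> real" where
  "price alg w v s = alg w (hist alg w v s)"

definition vals :: "nat \<Rightarrow> real measure \<Rightarrow> (nat \<Rightarrow> real) measure" where
  "vals T \<nu> = PiM {..<2 * T} (\<lambda>_. \<nu>)"

definition fixed_reward :: "nat \<Rightarrow> real measure \<Rightarrow> real \<Rightarrow> real" where
  "fixed_reward T \<nu> p = (\<integral>v. (\<Sum>s<T. gft p (v (2 * s)) (v (2 * s + 1))) \<partial>vals T \<nu>)"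

definition alg_reward :: "nat \<Rightarrow> real measure \<Rightarrow> 'w measure \<Rightarrow> ('w \<Rightarrow> (bool \<times> bool) list \<Rightarrow> real) \<Rightarrow> real" where
  "alg_reward T \<nu> \<Omega> alg =
     (\<integral>wv. (\<Sum>s<T. gft (price alg (fst wv) (snd wv) s) (snd wv (2 * s)) (snd wv (2 * s + 1)))
        \<partial>(\<Omega> \<Otimes>\<^sub>M vals T \<nu>))"

text \<open>Regret R_T^nu (as an extended real, so that the supremum is unconditionally meaningful).\<close>
definition regret :: "nat \<Rightarrow> real measure \<Rightarrow> 'w measure \<Rightarrow> ('w \<Rightarrow> (bool \<times> bool) list \<Rightarrow> real) \<Rightarrow> ereal" where
  "regret T \<nu> \<Omega> alg = (SUP p\<in>{0..1}. ereal (fixed_reward T \<nu> p)) - ereal (alg_reward T \<nu> \<Omega> alg)"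

definition dists01 :: "real measure set" where
  "dists01 = {\<nu>. prob_space \<nu> \<and> sets \<nu> = sets borel \<and> measure \<nu> {0..1} = 1}"

end

theory Submission
  imports Defs
begin

text \<open>
  Take valuations with law \<open>\<nu>\<^sub>c = (\<delta>\<^sub>0 + 2\<delta>\<^sub>c + \<delta>\<^sub>1) / 4\<close>, \<open>c \<in> [4/9, 5/9]\<close>.
  The price \<open>P\<close> of a round depends only on earlier valuations, so the expected gain of the
  round is \<open>G(P)\<close>, where \<open>G = expected_gft \<nu>\<^sub>c\<close> is the expected gain from trade of a fixed
  price on one pair of valuations.  For \<open>\<nu>\<^sub>c\<close> one computes \<open>G(c) = 3/8\<close>, whereas
  \<open>G(p) \<le> 19/72\<close> for every other \<open>p \<in> [0, 1]\<close>; and \<open>3/8 - 19/72 = 1/9\<close>.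
  With two-bit feedback there are only countably many histories, so the prices the algorithm
  can post have countably many atoms altogether, and some \<open>c\<close> in the uncountable interval
  \<open>[4/9, 5/9]\<close> is almost surely never posted.
\<close>

lemma borel_measurable_gft:
  assumes [measurable]: "f \<in> borel_measurable N" "g \<in> borel_measurable N" "k \<in> borel_measurable N"
  shows "(\<lambda>x. gft (f x) (g x) (k x)) \<in> borel_measurable N"
  unfolding gft_def by measurable

lemma gft_nonneg: "0 \<le> gft p y z"
  unfolding gft_def by auto

lemma gft_le_1: "y \<in> {0..1} \<Longrightarrow> z \<in> {0..1} \<Longrightarrow> gft p y z \<le> 1"
  unfolding gft_def by auto

lemma dists01D:
  assumes "\<nu> \<in> dists01"
  shows "prob_space \<nu>" "sets \<nu> = sets borel" "AE x in \<nu>. x \<in> {0..1}"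
proof -
  show ps: "prob_space \<nu>" and sets: "sets \<nu> = sets borel" using assms by (auto simp: dists01_def)
  show "AE x in \<nu>. x \<in> {0..1}"
    using assms by (intro prob_space.AE_prob_1[OF ps]) (simp add: dists01_def)
qed

lemma (in prob_space) integral_le_const_nonneg:
  fixes f :: "'a \<Rightarrow> real"
  assumes "AE x in M. f x \<le> c" "0 \<le> c"
  shows "(\<integral>x. f x \<partial>M) \<le> c"
  using assms integral_le_const[of f c] by (cases "integrable M f") (auto simp: not_integrable_integral_eq)

lemma borel_measurable_PiM_component:
  assumes "sets N = sets borel" "j \<in> K"
  shows "(\<lambda>v. v j) \<in> borel_measurable (PiM K (\<lambda>_. N))"
  using measurable_component_singleton[OF assms(2), of "\<lambda>_. N"]
  by (simp add: measurable_cong_sets[OF refl assms(1)])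

definition expected_gft :: "real measure \<Rightarrow> real \<Rightarrow> real" where
  "expected_gft \<nu> p = (\<integral>z. (\<integral>y. gft p y z \<partial>\<nu>) \<partial>\<nu>)"

lemma borel_measurable_integral_gft:
  assumes "sigma_finite_measure \<nu>" and "sets \<nu> = sets borel"
  shows "(\<lambda>x. \<integral>y. gft (fst x) y (snd x) \<partial>\<nu>) \<in> borel_measurable (borel \<Otimes>\<^sub>M borel)"
proof -
  interpret sigma_finite_measure \<nu> by fact
  have "(\<lambda>(x, y). gft (fst x) y (snd x)) \<in> borel_measurable ((borel \<Otimes>\<^sub>M borel) \<Otimes>\<^sub>M borel)"
    unfolding gft_def by measurable
  then have "(\<lambda>(x, y). gft (fst x) y (snd x)) \<in> borel_measurable ((borel \<Otimes>\<^sub>M borel) \<Otimes>\<^sub>M \<nu>)"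
    by (subst measurable_cong_sets[OF sets_pair_measure_cong[OF refl assms(2)] refl])
  then show ?thesis
    by (rule borel_measurable_lebesgue_integral[where f="\<lambda>x y. gft (fst x) y (snd x)"])
qed

lemma integral_gft_le_1:
  assumes "\<nu> \<in> dists01" "z \<in> {0..1}"
  shows "(\<integral>y. gft p y z \<partial>\<nu>) \<le> 1"
proof -
  interpret prob_space \<nu> using dists01D[OF assms(1)] by simp
  show ?thesis
    using gft_le_1[OF _ assms(2)]
    by (intro integral_le_const_nonneg eventually_mono[OF dists01D(3)[OF assms(1)]]) auto
qed

lemma expected_gft_nonneg: "0 \<le> expected_gft \<nu> p"
  unfolding expected_gft_def by (simp add: gft_nonneg)

lemma integrable_gft_PiM:
  assumes \<nu>: "\<nu> \<in> dists01" and I: "finite I" "a \<in> I" "b \<in> I"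
    and P: "P \<in> borel_measurable (PiM I (\<lambda>_. \<nu>))"
  shows "integrable (PiM I (\<lambda>_. \<nu>)) (\<lambda>v. gft (P v) (v a) (v b))"
proof -
  interpret \<nu>: prob_space \<nu> using dists01D[OF \<nu>] by simp
  interpret prob_space "PiM I (\<lambda>_. \<nu>)" by (intro prob_space_PiM \<nu>.prob_space_axioms)
  have in01: "AE x in \<nu>. x \<in> {0..1}" using dists01D[OF \<nu>] by simp
  show ?thesis
  proof (rule integrable_const_bound[where B=1])
    show "AE v in PiM I (\<lambda>_. \<nu>). norm (gft (P v) (v a) (v b)) \<le> 1"
      using AE_PiM_component[OF \<nu>.prob_space_axioms I(2) in01]
        AE_PiM_component[OF \<nu>.prob_space_axioms I(3) in01]
      by eventually_elim (simp add: gft_nonneg gft_le_1)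
  qed (use I P dists01D(2)[OF \<nu>] in \<open>auto intro!: borel_measurable_gft borel_measurable_PiM_component\<close>)
qed

lemma integrable_integral_gft_PiM:
  assumes \<nu>: "\<nu> \<in> dists01" and "b \<in> K"
    and P: "P \<in> borel_measurable (PiM K (\<lambda>_. \<nu>))"
  shows "integrable (PiM K (\<lambda>_. \<nu>)) (\<lambda>x. \<integral>y. gft (P x) y (x b) \<partial>\<nu>)"
proof -
  interpret \<nu>: prob_space \<nu> using dists01D[OF \<nu>] by simp
  interpret prob_space "PiM K (\<lambda>_. \<nu>)" by (intro prob_space_PiM \<nu>.prob_space_axioms)
  have in01: "AE x in \<nu>. x \<in> {0..1}" using dists01D[OF \<nu>] by simp
  show ?thesis
  proof (rule integrable_const_bound[where B=1])
    show "AE x in PiM K (\<lambda>_. \<nu>). norm (\<integral>y. gft (P x) y (x b) \<partial>\<nu>) \<le> 1"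
      using AE_PiM_component[OF \<nu>.prob_space_axioms \<open>b \<in> K\<close> in01]
      by eventually_elim (simp add: gft_nonneg integral_gft_le_1[OF \<nu>])
    have "(\<lambda>x. (P x, x b)) \<in> PiM K (\<lambda>_. \<nu>) \<rightarrow>\<^sub>M borel \<Otimes>\<^sub>M borel"
      using P borel_measurable_PiM_component[OF dists01D(2)[OF \<nu>] \<open>b \<in> K\<close>]
      by (rule measurable_Pair)
    from measurable_comp[OF this borel_measurable_integral_gft[OF \<nu>.sigma_finite_measure_axioms]]
    show "(\<lambda>x. \<integral>y. gft (P x) y (x b) \<partial>\<nu>) \<in> borel_measurable (PiM K (\<lambda>_. \<nu>))"
      using dists01D(2)[OF \<nu>] by (simp add: comp_def)
  qed
qed

lemma integral_PiM_gft_eq_expected_gft: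
  assumes \<nu>: "\<nu> \<in> dists01" and I: "finite I" "a \<in> I" "b \<in> I" "a \<noteq> b"
    and P_meas: "P \<in> borel_measurable (PiM (I - {a, b}) (\<lambda>_. \<nu>))"
    and P_restrict: "\<And>v. P (restrict v (I - {a, b})) = P v"
  shows "(\<integral>v. gft (P v) (v a) (v b) \<partial>PiM I (\<lambda>_. \<nu>))
    = (\<integral>v. expected_gft \<nu> (P v) \<partial>PiM (I - {a, b}) (\<lambda>_. \<nu>))"
proof -
  interpret \<nu>: prob_space \<nu> using dists01D[OF \<nu>] by simp
  interpret product_sigma_finite "\<lambda>_. \<nu>" by unfold_locales
  define J where "J = I - {a, b}"
  define K where "K = insert b J"
  have IK: "I = insert a K" "a \<notin> K" "finite K" and KJ: "b \<notin> J" "finite J" "b \<in> K"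
    using I by (auto simp: K_def J_def)
  have P_sub: "P \<in> borel_measurable (PiM L (\<lambda>_. \<nu>))" if "J \<subseteq> L" for L
    using measurable_comp[OF measurable_restrict_subset[OF that] P_meas[folded J_def]] P_restrict
    by (simp add: J_def comp_def)
  have P_upd: "P (x(j := y)) = P x" if "j \<notin> J" for x j y
  proof -
    have "restrict (x(j := y)) J = restrict x J" using that by (auto simp: restrict_def)
    then show ?thesis using P_restrict by (metis J_def)
  qed
  have "integrable (PiM I (\<lambda>_. \<nu>)) (\<lambda>v. gft (P v) (v a) (v b))"
    using I by (intro integrable_gft_PiM[OF \<nu>] P_sub) (auto simp: J_def)
  then have "(\<integral>v. gft (P v) (v a) (v b) \<partial>PiM I (\<lambda>_. \<nu>))
      = (\<integral>x. (\<integral>y. gft (P x) y (x b) \<partial>\<nu>) \<partial>PiM K (\<lambda>_. \<nu>))"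
    using IK I(4) by (simp add: product_integral_insert P_upd K_def)
  also have "\<dots> = (\<integral>x. expected_gft \<nu> (P x) \<partial>PiM J (\<lambda>_. \<nu>))"
  proof -
    have "integrable (PiM K (\<lambda>_. \<nu>)) (\<lambda>x. \<integral>y. gft (P x) y (x b) \<partial>\<nu>)"
      by (intro integrable_integral_gft_PiM[OF \<nu> KJ(3)] P_sub) (auto simp: K_def)
    then show ?thesis
      using KJ by (simp add: product_integral_insert K_def P_upd expected_gft_def)
  qed
  finally show ?thesis by (simp add: J_def)
qed

lemma hist_cong:
  assumes "\<And>j. j < 2 * s \<Longrightarrow> v j = u j"
  shows "hist alg w v s = hist alg w u s"
  using assms
proof (induction s)
  case (Suc s)
  then have "hist alg w v s = hist alg w u s" "v (2 * s) = u (2 * s)" "v (2 * s + 1) = u (2 * s + 1)"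
    by simp_all
  then show ?case by (simp add: Let_def)
qed simp

lemma measurable_hist:
  assumes "sets N = sets borel" "{..<2 * s} \<subseteq> K"
  shows "(\<lambda>v. hist alg w v s) \<in> PiM K (\<lambda>_. N) \<rightarrow>\<^sub>M count_space UNIV"
  using assms(2)
proof (induction s)
  case 0
  then show ?case by simp
next
  case (Suc s)
  have [measurable]: "(\<lambda>v. v (2 * s)) \<in> borel_measurable (PiM K (\<lambda>_. N))"
    "(\<lambda>v. v (2 * s + 1)) \<in> borel_measurable (PiM K (\<lambda>_. N))"
    using Suc.prems by (auto intro!: borel_measurable_PiM_component[OF assms(1)])
  have step: "(\<lambda>v. l @ [(alg w l \<le> v (2 * s), alg w l \<le> v (2 * s + 1))])
      \<in> PiM K (\<lambda>_. N) \<rightarrow>\<^sub>M count_space UNIV" for l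
    by measurable
  have "{..<2 * s} \<subseteq> K" using Suc.prems by auto
  from measurable_compose_countable[OF step Suc.IH[OF this]] show ?case
    unfolding hist.simps Let_def .
qed

lemma measurable_price:
  assumes "sets N = sets borel" "{..<2 * s} \<subseteq> K"
  shows "(\<lambda>v. price alg w v s) \<in> borel_measurable (PiM K (\<lambda>_. N))"
  unfolding price_def
  by (rule measurable_compose_countable[where f="\<lambda>l v. alg w l", OF _ measurable_hist[OF assms]]) simp

lemma fixed_reward_eq:
  assumes \<nu>: "\<nu> \<in> dists01"
  shows "fixed_reward T \<nu> p = T * expected_gft \<nu> p"
proof -
  have "fixed_reward T \<nu> p = (\<Sum>s<T. \<integral>v. gft p (v (2 * s)) (v (2 * s + 1)) \<partial>vals T \<nu>)"
    unfolding fixed_reward_def vals_def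
    by (intro Bochner_Integration.integral_sum integrable_gft_PiM[OF \<nu>]) auto
  also have "\<dots> = (\<Sum>s<T. expected_gft \<nu> p)"
  proof (rule sum.cong[OF refl])
    fix s assume "s \<in> {..<T}"
    then have "(\<integral>v. gft p (v (2 * s)) (v (2 * s + 1)) \<partial>vals T \<nu>)
        = (\<integral>v. expected_gft \<nu> p \<partial>PiM ({..<2 * T} - {2 * s, 2 * s + 1}) (\<lambda>_. \<nu>))"
      unfolding vals_def by (intro integral_PiM_gft_eq_expected_gft[OF \<nu>, where P="\<lambda>_. p"]) auto
    also have "\<dots> = expected_gft \<nu> p"
      by (simp add: prob_space.prob_space[OF prob_space_PiM[OF dists01D(1)[OF \<nu>]]])
    finally show "(\<integral>v. gft p (v (2 * s)) (v (2 * s + 1)) \<partial>vals T \<nu>) = expected_gft \<nu> p" .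
  qed
  finally show ?thesis by simp
qed

lemma integral_gft_price_le:
  assumes \<nu>: "\<nu> \<in> dists01" and s: "s < T" and B: "\<And>h. expected_gft \<nu> (alg w h) \<le> B"
  shows "(\<integral>v. gft (price alg w v s) (v (2 * s)) (v (2 * s + 1)) \<partial>vals T \<nu>) \<le> B"
proof -
  define J where "J = {..<2 * T} - {2 * s, 2 * s + 1}"
  interpret prob_space "PiM J (\<lambda>_. \<nu>)"
    using dists01D(1)[OF \<nu>] by (rule prob_space_PiM)
  have "{..<2 * s} \<subseteq> J" using s by (auto simp: J_def)
  then have "(\<integral>v. gft (price alg w v s) (v (2 * s)) (v (2 * s + 1)) \<partial>vals T \<nu>)
      = (\<integral>v. expected_gft \<nu> (price alg w v s) \<partial>PiM J (\<lambda>_. \<nu>))"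
    unfolding vals_def J_def using s
    by (intro integral_PiM_gft_eq_expected_gft[OF \<nu>] measurable_price[OF dists01D(2)[OF \<nu>]])
      (auto simp: price_def intro!: arg_cong[where f="alg w"] hist_cong)
  also have "\<dots> \<le> B"
    using B order_trans[OF expected_gft_nonneg B] by (intro integral_le_const_nonneg) (auto simp: price_def)
  finally show ?thesis .
qed

lemma integral_alg_gain_le:
  assumes \<nu>: "\<nu> \<in> dists01" and B: "\<And>h. expected_gft \<nu> (alg w h) \<le> B"
  shows "(\<integral>v. (\<Sum>s<T. gft (price alg w v s) (v (2 * s)) (v (2 * s + 1))) \<partial>vals T \<nu>) \<le> T * B"
proof -
  have "(\<integral>v. (\<Sum>s<T. gft (price alg w v s) (v (2 * s)) (v (2 * s + 1))) \<partial>vals T \<nu>)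
      = (\<Sum>s<T. \<integral>v. gft (price alg w v s) (v (2 * s)) (v (2 * s + 1)) \<partial>vals T \<nu>)"
    unfolding vals_def
    by (intro Bochner_Integration.integral_sum integrable_gft_PiM[OF \<nu>]
        measurable_price[OF dists01D(2)[OF \<nu>]]) auto
  also have "\<dots> \<le> (\<Sum>s<T. B)"
    using B by (intro sum_mono integral_gft_price_le[OF \<nu>]) auto
  finally show ?thesis by simp
qed

lemma alg_reward_le:
  assumes \<Omega>: "prob_space \<Omega>" and \<nu>: "\<nu> \<in> dists01"
    and B: "AE w in \<Omega>. \<forall>h. expected_gft \<nu> (alg w h) \<le> B"
  shows "alg_reward T \<nu> \<Omega> alg \<le> T * B"
proof -
  interpret \<Omega>: prob_space \<Omega> by fact
  interpret V: prob_space "vals T \<nu>"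
    unfolding vals_def using dists01D(1)[OF \<nu>] by (rule prob_space_PiM)
  interpret pair_sigma_finite \<Omega> "vals T \<nu>" by unfold_locales
  define gain where "gain w v = (\<Sum>s<T. gft (price alg w v s) (v (2 * s)) (v (2 * s + 1)))" for w v
  have "AE w in \<Omega>. 0 \<le> B"
    using B by eventually_elim (meson expected_gft_nonneg order_trans)
  then have "0 \<le> B" by simp
  show ?thesis
  proof (cases "integrable (\<Omega> \<Otimes>\<^sub>M vals T \<nu>) (\<lambda>wv. gain (fst wv) (snd wv))")
    case True
    have "alg_reward T \<nu> \<Omega> alg = (\<integral>w. (\<integral>v. gain w v \<partial>vals T \<nu>) \<partial>\<Omega>)"
      unfolding alg_reward_def gain_def[symmetric] using integral_fst'[OF True] by simp
    also have "\<dots> \<le> T * B"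
    proof (rule \<Omega>.integral_le_const_nonneg)
      show "AE w in \<Omega>. (\<integral>v. gain w v \<partial>vals T \<nu>) \<le> T * B"
        using B unfolding gain_def by eventually_elim (rule integral_alg_gain_le[OF \<nu>], simp)
      show "0 \<le> T * B" using \<open>0 \<le> B\<close> by simp
    qed
    finally show ?thesis .
  next
    case False
    then show ?thesis
      using \<open>0 \<le> B\<close> by (simp add: alg_reward_def gain_def not_integrable_integral_eq)
  qed
qed

lemma exists_value_AE_avoided:
  fixes X :: "'i::countable \<Rightarrow> 'w \<Rightarrow> real"
  assumes \<Omega>: "prob_space \<Omega>" and X: "\<And>i. X i \<in> borel_measurable \<Omega>" and U: "uncountable U"
  obtains c where "c \<in> U" "AE w in \<Omega>. \<forall>i. X i w \<noteq> c"
proof -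
  interpret prob_space \<Omega> by fact
  define atoms where "atoms = (\<Union>i. {x. measure (distr \<Omega> borel (X i)) {x} \<noteq> 0})"
  have "countable atoms"
    unfolding atoms_def
    using X by (intro countable_UN[OF countableI_type] finite_measure.countable_support
        prob_space.finite_measure prob_space_distr)
  then obtain c where c: "c \<in> U" "c \<notin> atoms"
    using U by (metis countable_subset subsetI)
  have "AE w in \<Omega>. X i w \<noteq> c" for i
  proof -
    have "measure \<Omega> {w \<in> space \<Omega>. X i w = c} = 0"
      using c(2) X by (auto simp: atoms_def measure_distr vimage_def Int_def conj_commute)
    then show ?thesis
      using X by (subst AE_iff_measurable[OF _ refl]) (auto simp: emeasure_eq_measure)
  qed
  then show ?thesis
    using c(1) by (intro that) (auto simp: AE_all_countable)
qed

text \<open>\<open>measure_pmf\<close> carries the discrete \<sigma>-algebra; the push-forward to \<open>borel\<close> makes the law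
  a member of \<open>dists01\<close>.\<close>
definition hard_dist :: "real \<Rightarrow> real measure" where
  "hard_dist c = distr (measure_pmf (pmf_of_multiset {#0, c, c, 1#})) borel (\<lambda>x. x)"

lemma hard_dist_in_dists01:
  assumes "c \<in> {0..1}"
  shows "hard_dist c \<in> dists01"
proof -
  interpret prob_space "hard_dist c"
    unfolding hard_dist_def by (rule prob_space.prob_space_distr) (auto simp: prob_space_measure_pmf)
  have "AE x in hard_dist c. x \<in> {0..1}"
    unfolding hard_dist_def using assms
    by (subst AE_distr_iff) (auto simp: AE_measure_pmf_iff)
  then show ?thesis
    using prob_eq_1[of "{0..1}"] prob_space_axioms by (simp add: dists01_def hard_dist_def)
qed

lemma integral_hard_dist:
  fixes f :: "real \<Rightarrow> real"
  assumes "0 < c" "c < 1" and f: "f \<in> borel_measurable borel"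
  shows "(\<integral>x. f x \<partial>hard_dist c) = (f 0 + 2 * f c + f 1) / 4"
proof -
  have "(\<integral>x. f x \<partial>hard_dist c) = (\<integral>x. f x \<partial>measure_pmf (pmf_of_multiset {#0, c, c, 1#}))"
    unfolding hard_dist_def using f by (simp add: integral_distr)
  also have "\<dots> = (\<Sum>a\<in>{0, c, 1}. f a * pmf (pmf_of_multiset {#0, c, c, 1#}) a)"
    by (rule integral_measure_pmf_real) auto
  also have "\<dots> = (f 0 + 2 * f c + f 1) / 4"
    using assms by simp
  finally show ?thesis .
qed

lemma expected_gft_hard_dist:
  assumes "0 < c" "c < 1" "p \<in> {0..1}"
  shows "expected_gft (hard_dist c) p
    = (if p = c then 3 / 8 else if p < c then (2 * c + 1) / 8 else (3 - 2 * c) / 8)"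
proof -
  have inner: "(\<integral>y. gft p y z \<partial>hard_dist c) = (gft p 0 z + 2 * gft p c z + gft p 1 z) / 4" for z
    using assms by (intro integral_hard_dist) (auto simp: gft_def)
  show ?thesis
    unfolding expected_gft_def inner using assms
    by (subst integral_hard_dist) (auto simp: gft_def field_simps)
qed

theorem theorem5p4:
  fixes T :: nat and \<Omega> :: "'w measure" and alg :: "'w \<Rightarrow> (bool \<times> bool) list \<Rightarrow> real"
  assumes "prob_space \<Omega>"
    and "\<And>h. (\<lambda>w. alg w h) \<in> borel_measurable \<Omega>"
    and "\<And>w h. alg w h \<in> {0..1}"
  shows "(SUP \<nu>\<in>dists01. regret T \<nu> \<Omega> alg) \<ge> ereal (real T / 9)"
proof -
  have "uncountable {4/9..5/9 :: real}" by (simp add: uncountable_closed_interval)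
  then obtain c where c: "c \<in> {4/9..5/9}" and avoid: "AE w in \<Omega>. \<forall>h. alg w h \<noteq> c"
    using exists_value_AE_avoided[where X="\<lambda>h w. alg w h", OF assms(1,2)] by blast
  define \<nu> where "\<nu> = hard_dist c"
  have \<nu>: "\<nu> \<in> dists01" using c by (simp add: \<nu>_def hard_dist_in_dists01)
  have "expected_gft \<nu> (alg w h) \<le> 19 / 72" if "alg w h \<noteq> c" for w h
    using expected_gft_hard_dist[of c "alg w h"] assms(3)[of w h] c that by (auto simp: \<nu>_def)
  with avoid have alg: "alg_reward T \<nu> \<Omega> alg \<le> T * (19 / 72)"
    by (intro alg_reward_le[OF assms(1) \<nu>]) (auto elim!: eventually_mono)
  have "fixed_reward T \<nu> c = T * (3 / 8)"
    using fixed_reward_eq[OF \<nu>] expected_gft_hard_dist[of c c] c by (simp add: \<nu>_def)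
  then have fixed: "ereal (T * (3 / 8)) \<le> (SUP p\<in>{0..1}. ereal (fixed_reward T \<nu> p))"
    using c by (intro SUP_upper2[of c]) auto
  have "ereal (real T / 9) \<le> ereal (T * (3 / 8)) - ereal (alg_reward T \<nu> \<Omega> alg)"
    using alg by simp
  also have "\<dots> \<le> regret T \<nu> \<Omega> alg"
    unfolding regret_def using fixed by (rule ereal_minus_mono) simp
  finally show ?thesis
    using \<nu> by (intro SUP_upper2[of \<nu>])
qed

end
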